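(* Let $\Gamma$ be a valued structure with domain $\mathbb{Q}$ all of whose cost functions are piecewise linear (or piecewise linear homogeneous) and submodular. Then $\Gamma$ has fully symmetric fractional polymorphisms of all arities $k\ge2$.
   Context: A valued structure with domain $\mathbb{Q}$ has a signature $\tau$ of function symbols and cost functions $f\colon\mathbb{Q}^{\mathrm{ar}(f)}\to\mathbb{Q}\cup\{+\infty\}$. A cost function is piecewise linear (PL) if, as a partial function defined where finite, it is first-order definable over $\mathfrak{S}=(\mathbb{Q};+,1,\le)$, and piecewise linear homogeneous (PLH) if first-order definable over $\mathfrak{L}=(\mathbb{Q};<,1,(x\mapsto cx)_{c\in\mathbb{Q}})$ (definability of a partial $f$: a formula $\varphi(x_0,\dots,x_n)$ with $\varphi(a_0,a)$ iff $a_0=f(a)$ for $f(a)<\infty$, and no satisfying $a_0$ when $f(a)=+\infty$). $f$ is submodular if $f(\min(a,b))+f(\max(a,b))\le f(a)+f(b)$ for all $a,b$ (componentwise min, max). A $k$-ary fractional polymorphism of $\Gamma$ is a map $\omega$ from operations $\mathbb{Q}^k\to\mathbb{Q}$ to $\mathbb{Q}_{\ge0}$ with finite support, total weight $1$, and $\sum_g\omega(g)f(g(a^1,\dots,a^k))\le\frac1k\sum_i f(a^i)$ for all cost functions $f$ of $\Gamma$ and tuples $a^i$ ($g$ componentwise); it is fully symmetric if each $g$ in its support is invariant under permuting its arguments. *)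

theory Defs
  imports Complex_Main "HOL-Library.Extended_Real" "HOL-Library.Multiset"
begin

datatype 'a fm =
    Atom 'a
  | FNot "'a fm"
  | FAnd "'a fm" "'a fm"
  | FOr "'a fm" "'a fm"
  | FEx nat "'a fm"
  | FAll nat "'a fm"

primrec holds :: "('a \<Rightarrow> (nat \<Rightarrow> rat) \<Rightarrow> bool) \<Rightarrow> 'a fm \<Rightarrow> (nat \<Rightarrow> rat) \<Rightarrow> bool" where
  "holds I (Atom a) e = I a e"
| "holds I (FNot p) e = (\<not> holds I p e)"
| "holds I (FAnd p q) e = (holds I p e \<and> holds I q e)"
| "holds I (FOr p q) e = (holds I p e \<or> holds I q e)"
| "holds I (FEx x p) e = (\<exists>v. holds I p (e(x := v)))"
| "holds I (FAll x p) e = (\<forall>v. holds I p (e(x := v)))"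

datatype sterm = SVar nat | SOne | SPlus sterm sterm

primrec seval :: "sterm \<Rightarrow> (nat \<Rightarrow> rat) \<Rightarrow> rat" where
  "seval (SVar i) e = e i"
| "seval SOne e = 1"
| "seval (SPlus s t) e = seval s e + seval t e"

datatype satom = SEq sterm sterm | SLe sterm sterm

fun satom_sem :: "satom \<Rightarrow> (nat \<Rightarrow> rat) \<Rightarrow> bool" where
  "satom_sem (SEq s t) e = (seval s e = seval t e)"
| "satom_sem (SLe s t) e = (seval s e \<le> seval t e)"

datatype lterm = LVar nat | LOne | LScale rat lterm

primrec leval :: "lterm \<Rightarrow> (nat \<Rightarrow> rat) \<Rightarrow> rat" where
  "leval (LVar i) e = e i"
| "leval LOne e = 1"
| "leval (LScale c t) e = c * leval t e"

datatype latom = LEq lterm lterm | LLess lterm lterm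

fun latom_sem :: "latom \<Rightarrow> (nat \<Rightarrow> rat) \<Rightarrow> bool" where
  "latom_sem (LEq s t) e = (leval s e = leval t e)"
| "latom_sem (LLess s t) e = (leval s e < leval t e)"

text \<open>A cost function of arity n is modelled as f :: rat list => ereal, evaluated on
  lists of length n, with values in Q or +infinity.\<close>

definition rat_valued :: "nat \<Rightarrow> (rat list \<Rightarrow> ereal) \<Rightarrow> bool" where
  "rat_valued n f \<longleftrightarrow>
     (\<forall>xs. length xs = n \<longrightarrow> f xs = \<infinity> \<or> (\<exists>q. f xs = ereal (real_of_rat q)))"

text \<open>phi fo_defines the partial function f: variable 0 is the value, variables 1..n the arguments.\<close>
definition fo_defines :: "('a \<Rightarrow> (nat \<Rightarrow> rat) \<Rightarrow> bool) \<Rightarrow> 'a fm \<Rightarrow> nat \<Rightarrow> (rat list \<Rightarrow> ereal) \<Rightarrow> bool" where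
  "fo_defines I phi n f \<longleftrightarrow>
     (\<forall>e. holds I phi e \<longleftrightarrow> f (map e [1..<n+1]) = ereal (real_of_rat (e 0)))"

definition PL :: "nat \<Rightarrow> (rat list \<Rightarrow> ereal) \<Rightarrow> bool" where
  "PL n f \<longleftrightarrow> (\<exists>phi :: satom fm. fo_defines satom_sem phi n f)"

definition PLH :: "nat \<Rightarrow> (rat list \<Rightarrow> ereal) \<Rightarrow> bool" where
  "PLH n f \<longleftrightarrow> (\<exists>phi :: latom fm. fo_defines latom_sem phi n f)"

definition submodular :: "nat \<Rightarrow> (rat list \<Rightarrow> ereal) \<Rightarrow> bool" where
  "submodular n f \<longleftrightarrow>
     (\<forall>a b. length a = n \<longrightarrow> length b = n \<longrightarrow>
        f (map2 min a b) + f (map2 max a b) \<le> f a + f b)"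

text \<open>A k-ary operation is g :: rat list => rat, applied to argument lists of length k.
  Applying g componentwise to the tuples as = [a^1,...,a^k] (each of length n):\<close>
definition apply_op :: "(rat list \<Rightarrow> rat) \<Rightarrow> nat \<Rightarrow> rat list list \<Rightarrow> rat list" where
  "apply_op g n as = map (\<lambda>j. g (map (\<lambda>a. a ! j) as)) [0..<n]"

definition supp :: "((rat list \<Rightarrow> rat) \<Rightarrow> rat) \<Rightarrow> (rat list \<Rightarrow> rat) set" where
  "supp \<omega> = {g. \<omega> g \<noteq> 0}"

text \<open>Valued structure: symbols of type 's, arity ar, cost functions cf.\<close>
definition fractional_polymorphism ::
  "('s \<Rightarrow> nat) \<Rightarrow> ('s \<Rightarrow> rat list \<Rightarrow> ereal) \<Rightarrow> nat \<Rightarrow> ((rat list \<Rightarrow> rat) \<Rightarrow> rat) \<Rightarrow> bool" where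
  "fractional_polymorphism ar cf k \<omega> \<longleftrightarrow>
     (\<forall>g. 0 \<le> \<omega> g) \<and> finite (supp \<omega>) \<and> (\<Sum>g\<in>supp \<omega>. \<omega> g) = 1 \<and>
     (\<forall>s as. length as = k \<longrightarrow> (\<forall>a\<in>set as. length a = ar s) \<longrightarrow>
        (\<Sum>g\<in>supp \<omega>. ereal (real_of_rat (\<omega> g)) * cf s (apply_op g (ar s) as))
          \<le> ereal (1 / real k) * (\<Sum>i<k. cf s (as ! i)))"

definition fully_symmetric :: "nat \<Rightarrow> ((rat list \<Rightarrow> rat) \<Rightarrow> rat) \<Rightarrow> bool" where
  "fully_symmetric k \<omega> \<longleftrightarrow>
     (\<forall>g\<in>supp \<omega>. \<forall>xs ys. length xs = k \<longrightarrow> mset ys = mset xs \<longrightarrow> g ys = g xs)"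

end

theory Submission
  imports Defs
begin

text \<open>The order statistics \<open>x \<mapsto> i\<close>-th smallest of \<open>x\<^sub>1, \<dots>, x\<^sub>k\<close>, \<open>i < k\<close>, each with weight
  \<open>1/k\<close>, form a fully symmetric fractional polymorphism of every submodular valued structure.
  Applied componentwise to tuples \<open>a\<^sup>1, \<dots>, a\<^sup>k\<close> they yield the componentwise sorted tuples,
  and these arise from \<open>a\<^sup>1, \<dots>, a\<^sup>k\<close> by repeatedly replacing a pair \<open>(a, b)\<close> by
  \<open>(min a b, max a b)\<close>; by submodularity no such step increases the total cost.
  Neither piecewise linearity nor rationality of the costs plays a role in this argument.\<close>

fun tuple_insort :: "'a::linorder list \<Rightarrow> 'a list list \<Rightarrow> 'a list list" where
  "tuple_insort x [] = [x]"
| "tuple_insort x (c # cs) = map2 min x c # tuple_insort (map2 max x c) cs"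

definition tuple_sort :: "'a::linorder list list \<Rightarrow> 'a list list" where
  "tuple_sort as = foldr tuple_insort as []"

abbreviation column :: "nat \<Rightarrow> 'a list list \<Rightarrow> 'a list" where
  "column j as \<equiv> map (\<lambda>a. a ! j) as"

lemma tuple_sort_simps [simp]:
  "tuple_sort [] = []"
  "tuple_sort (a # as) = tuple_insort a (tuple_sort as)"
  by (simp_all add: tuple_sort_def)

lemma length_tuple_insort [simp]: "length (tuple_insort x C) = Suc (length C)"
  by (induction x C rule: tuple_insort.induct) auto

lemma length_tuple_sort [simp]: "length (tuple_sort as) = length as"
  by (induction as) auto

lemma tuple_insort_lengths:
  "length x = n \<Longrightarrow> \<forall>c\<in>set C. length c = n \<Longrightarrow> \<forall>c\<in>set (tuple_insort x C). length c = n"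
  by (induction x C rule: tuple_insort.induct) auto

lemma tuple_sort_lengths:
  "\<forall>a\<in>set as. length a = n \<Longrightarrow> \<forall>a\<in>set (tuple_sort as). length a = n"
  by (induction as) (auto intro: tuple_insort_lengths[rule_format])

lemma column_tuple_insort:
  assumes "j < n" "length x = n" "\<forall>c\<in>set C. length c = n" "sorted (column j C)"
  shows "column j (tuple_insort x C) = insort (x ! j) (column j C)"
  using assms
proof (induction x C rule: tuple_insort.induct)
  case (1 x)
  then show ?case by simp
next
  case (2 x c cs)
  then have IH: "column j (tuple_insort (map2 max x c) cs) = insort (max (x ! j) (c ! j)) (column j cs)"
    by simp
  show ?case
  proof (cases "x ! j \<le> c ! j")
    case True
    have "insort (c ! j) (column j cs) = c ! j # column j cs"
      using "2.prems"(4) by (cases cs) auto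
    with True IH "2.prems" show ?thesis by simp
  next
    case False
    with IH "2.prems" show ?thesis by simp
  qed
qed

lemma column_tuple_sort:
  assumes "j < n" "\<forall>a\<in>set as. length a = n"
  shows "column j (tuple_sort as) = sort (column j as)"
  using assms(2)
proof (induction as)
  case Nil
  then show ?case by simp
next
  case (Cons a as)
  then show ?case
    using assms(1) tuple_sort_lengths[of as n] by (simp add: column_tuple_insort)
qed

lemma sum_list_tuple_insort_le:
  assumes "submodular n f" "length x = n" "\<forall>c\<in>set C. length c = n"
  shows "sum_list (map f (tuple_insort x C)) \<le> f x + sum_list (map f C)"
  using assms(2,3)
proof (induction x C rule: tuple_insort.induct)
  case (1 x)
  then show ?case by simp
next
  case (2 x c cs)
  have "sum_list (map f (tuple_insort x (c # cs)))
      = f (map2 min x c) + sum_list (map f (tuple_insort (map2 max x c) cs))"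
    by simp
  also have "\<dots> \<le> f (map2 min x c) + (f (map2 max x c) + sum_list (map f cs))"
    using 2 by (intro add_left_mono) simp
  also have "\<dots> = (f (map2 min x c) + f (map2 max x c)) + sum_list (map f cs)"
    by (simp add: add.assoc)
  also have "\<dots> \<le> (f x + f c) + sum_list (map f cs)"
    using assms(1) "2.prems" unfolding submodular_def by (intro add_right_mono) simp
  finally show ?case by (simp add: add.assoc)
qed

lemma sum_list_tuple_sort_le:
  assumes "submodular n f" "\<forall>a\<in>set as. length a = n"
  shows "sum_list (map f (tuple_sort as)) \<le> sum_list (map f as)"
  using assms(2)
proof (induction as)
  case Nil
  then show ?case by simp
next
  case (Cons a as)
  have "sum_list (map f (tuple_sort (a # as))) \<le> f a + sum_list (map f (tuple_sort as))"
    using sum_list_tuple_insort_le[OF assms(1)] Cons.prems tuple_sort_lengths[of as n] by simp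
  also have "\<dots> \<le> f a + sum_list (map f as)"
    using Cons by (intro add_left_mono) simp
  finally show ?case by simp
qed

definition order_stat :: "nat \<Rightarrow> 'a::linorder list \<Rightarrow> 'a" where
  "order_stat i xs = sort xs ! i"

lemma apply_op_order_stat:
  assumes "i < length as" "\<forall>a\<in>set as. length a = n"
  shows "apply_op (order_stat i) n as = tuple_sort as ! i"
proof (rule nth_equalityI)
  show "length (apply_op (order_stat i) n as) = length (tuple_sort as ! i)"
    using assms tuple_sort_lengths[of as n] by (simp add: apply_op_def)
next
  fix j assume "j < length (apply_op (order_stat i) n as)"
  then have "j < n" by (simp add: apply_op_def)
  then have "sort (column j as) ! i = column j (tuple_sort as) ! i"
    using assms(2) by (simp add: column_tuple_sort)
  then show "apply_op (order_stat i) n as ! j = tuple_sort as ! i ! j"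
    using \<open>j < n\<close> assms(1) by (simp add: apply_op_def order_stat_def)
qed

lemma order_stat_mset_eq: "mset ys = mset xs \<Longrightarrow> order_stat i ys = order_stat i xs"
  unfolding order_stat_def by (metis sorted_list_of_multiset_mset)

lemma inj_on_order_stat: "inj_on (order_stat :: nat \<Rightarrow> 'a::linordered_semidom list \<Rightarrow> 'a) {..<k}"
proof (rule inj_onI)
  fix i j assume "i \<in> {..<k}" "j \<in> {..<k}" and eq: "order_stat i = (order_stat j :: 'a list \<Rightarrow> 'a)"
  define xs :: "'a list" where "xs = map of_nat [0..<k]"
  have "sorted xs"
    by (simp add: xs_def sorted_map)
  then have "order_stat i xs = of_nat i" "order_stat j xs = of_nat j"
    using \<open>i \<in> {..<k}\<close> \<open>j \<in> {..<k}\<close> by (simp_all add: order_stat_def xs_def sorted_sort_id)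
  moreover have "order_stat i xs = order_stat j xs"
    using eq by simp
  ultimately show "i = j"
    by (metis of_nat_eq_iff)
qed

definition uniform_order_stats :: "nat \<Rightarrow> (rat list \<Rightarrow> rat) \<Rightarrow> rat" where
  "uniform_order_stats k g = (if g \<in> order_stat ` {..<k} then 1 / of_nat k else 0)"

lemma supp_uniform_order_stats:
  "0 < k \<Longrightarrow> supp (uniform_order_stats k) = order_stat ` {..<k}"
  by (auto simp: supp_def uniform_order_stats_def)

lemma fully_symmetric_uniform_order_stats:
  "fully_symmetric k (uniform_order_stats k)"
  unfolding fully_symmetric_def supp_def uniform_order_stats_def
  by (auto split: if_splits intro: order_stat_mset_eq)

lemma sum_uniform_order_stats:
  assumes "0 < k"
  shows "(\<Sum>g\<in>supp (uniform_order_stats k). ereal (real_of_rat (uniform_order_stats k g)) * F g)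
       = ereal (1 / real k) * (\<Sum>i<k. F (order_stat i))"
proof -
  have "(\<Sum>g\<in>supp (uniform_order_stats k). ereal (real_of_rat (uniform_order_stats k g)) * F g)
      = (\<Sum>i<k. ereal (1 / real k) * F (order_stat i))"
    using assms by (simp add: supp_uniform_order_stats sum.reindex[OF inj_on_order_stat]
        uniform_order_stats_def of_rat_divide)
  also have "\<dots> = ereal (1 / real k) * (\<Sum>i<k. F (order_stat i))"
    using sum_distrib_right_ereal[of "1 / real k" "\<lambda>i. F (order_stat i)" "{..<k}"]
    by (simp add: mult.commute)
  finally show ?thesis .
qed

lemma fractional_polymorphism_uniform_order_stats:
  assumes sub: "\<forall>s. submodular (ar s) (cf s)" and "0 < k"
  shows "fractional_polymorphism ar cf k (uniform_order_stats k)"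
  unfolding fractional_polymorphism_def
proof (intro conjI allI impI)
  show "0 \<le> uniform_order_stats k g" for g
    by (simp add: uniform_order_stats_def)
  show "finite (supp (uniform_order_stats k))"
    using \<open>0 < k\<close> by (simp add: supp_uniform_order_stats)
  show "(\<Sum>g\<in>supp (uniform_order_stats k). uniform_order_stats k g) = 1"
    using \<open>0 < k\<close> by (simp add: supp_uniform_order_stats sum.reindex[OF inj_on_order_stat]
        uniform_order_stats_def card_image[OF inj_on_order_stat])
next
  fix s and as :: "rat list list"
  assume len: "length as = k" and lengths: "\<forall>a\<in>set as. length a = ar s"
  have "(\<Sum>i<k. cf s (apply_op (order_stat i) (ar s) as)) = sum_list (map (cf s) (tuple_sort as))"
    using len lengths by (simp add: apply_op_order_stat sum_list_sum_nth atLeast0LessThan)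
  also have "\<dots> \<le> sum_list (map (cf s) as)"
    using sum_list_tuple_sort_le[of "ar s" "cf s" as] sub lengths by simp
  also have "\<dots> = (\<Sum>i<k. cf s (as ! i))"
    using len by (simp add: sum_list_sum_nth atLeast0LessThan)
  finally show "(\<Sum>g\<in>supp (uniform_order_stats k).
      ereal (real_of_rat (uniform_order_stats k g)) * cf s (apply_op g (ar s) as))
        \<le> ereal (1 / real k) * (\<Sum>i<k. cf s (as ! i))"
    using \<open>0 < k\<close> by (simp add: sum_uniform_order_stats ereal_mult_left_mono)
qed

theorem corollary5:
  fixes ar :: "'s \<Rightarrow> nat" and cf :: "'s \<Rightarrow> rat list \<Rightarrow> ereal"
  assumes valued: "\<forall>s. rat_valued (ar s) (cf s)"
    and pl: "(\<forall>s. PL (ar s) (cf s)) \<or> (\<forall>s. PLH (ar s) (cf s))"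
    and sub: "\<forall>s. submodular (ar s) (cf s)"
  shows "\<forall>k\<ge>2. \<exists>\<omega>. fractional_polymorphism ar cf k \<omega> \<and> fully_symmetric k \<omega>"
proof (intro allI impI exI conjI)
  fix k :: nat
  assume "2 \<le> k"
  then show "fractional_polymorphism ar cf k (uniform_order_stats k)"
    using fractional_polymorphism_uniform_order_stats[OF sub] by simp
  show "fully_symmetric k (uniform_order_stats k)"
    by (rule fully_symmetric_uniform_order_stats)
qed

end
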